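(* Let $G$ be a simple digraph with $n$ vertices $v_1,\ldots,v_n$ and $m$ arcs, and let $M_1=m+\frac12\sum_{i=1}^n(d_i^+-d_i^-)^2$. Then $SLE(G)\le\sqrt{2M_1 n}$.
   Context: A simple digraph is an orientation of a simple undirected graph (no loops, and between two distinct vertices at most one arc, in one direction). $d_i^+,d_i^-$ are the out- and in-degree of $v_i$. The skew-adjacency matrix $S(G)=[s_{ij}]$ has $s_{ij}=1$ if $(v_i,v_j)$ is an arc, $s_{ij}=-1$ if $(v_j,v_i)$ is an arc, and $0$ otherwise. $\widetilde{D}(G)=\mathrm{diag}(d_1^+-d_1^-,\ldots,d_n^+-d_n^-)$, $\widetilde{SL}(G)=\widetilde{D}(G)-S(G)$, and $SLE(G)=\sum_{i=1}^n|\mu_i|$ where $\mu_1,\ldots,\mu_n$ are the eigenvalues of $\widetilde{SL}(G)$ counted with algebraic multiplicity. *)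

theory Defs
  imports "Jordan_Normal_Form.Char_Poly"
begin

text \<open>A simple digraph on vertices v_1..v_n is encoded with vertex set {0..<n} and an arc
  predicate arc i j meaning (v_i, v_j) is an arc.\<close>

definition simple_digraph :: "nat \<Rightarrow> (nat \<Rightarrow> nat \<Rightarrow> bool) \<Rightarrow> bool" where
  "simple_digraph n arc \<longleftrightarrow>
     (\<forall>i j. arc i j \<longrightarrow> i < n \<and> j < n) \<and>
     (\<forall>i. \<not> arc i i) \<and>
     (\<forall>i j. arc i j \<longrightarrow> \<not> arc j i)"

definition num_arcs :: "nat \<Rightarrow> (nat \<Rightarrow> nat \<Rightarrow> bool) \<Rightarrow> nat" where
  "num_arcs n arc = card {(i, j). i < n \<and> j < n \<and> arc i j}"

definition out_deg :: "nat \<Rightarrow> (nat \<Rightarrow> nat \<Rightarrow> bool) \<Rightarrow> nat \<Rightarrow> nat" where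
  "out_deg n arc i = card {j. j < n \<and> arc i j}"

definition in_deg :: "nat \<Rightarrow> (nat \<Rightarrow> nat \<Rightarrow> bool) \<Rightarrow> nat \<Rightarrow> nat" where
  "in_deg n arc i = card {j. j < n \<and> arc j i}"

definition skew_adj :: "nat \<Rightarrow> (nat \<Rightarrow> nat \<Rightarrow> bool) \<Rightarrow> real mat" where
  "skew_adj n arc = mat n n (\<lambda>(i, j). if arc i j then 1 else if arc j i then -1 else 0)"

definition deg_diff_mat :: "nat \<Rightarrow> (nat \<Rightarrow> nat \<Rightarrow> bool) \<Rightarrow> real mat" where
  "deg_diff_mat n arc = mat n n (\<lambda>(i, j). if i = j
      then real (out_deg n arc i) - real (in_deg n arc i) else 0)"

definition skew_lap :: "nat \<Rightarrow> (nat \<Rightarrow> nat \<Rightarrow> bool) \<Rightarrow> real mat" where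
  "skew_lap n arc = deg_diff_mat n arc - skew_adj n arc"

text \<open>Eigenvalues with algebraic multiplicity: the complex roots (multiset) of the
  characteristic polynomial.\<close>
definition SLE :: "nat \<Rightarrow> (nat \<Rightarrow> nat \<Rightarrow> bool) \<Rightarrow> real" where
  "SLE n arc = sum_mset (image_mset cmod
      (proots (char_poly (map_mat complex_of_real (skew_lap n arc)))))"

end

theory Submission
  imports Defs "Jordan_Normal_Form.Schur_Decomposition" "HOL-Analysis.Convex"
begin

text \<open>
  Schur's inequality: the eigenvalues \<open>\<mu>\<^sub>i\<close> of a complex \<open>n \<times> n\<close> matrix \<open>A\<close> satisfy
  \<open>\<Sum>|\<mu>\<^sub>i|\<^sup>2 \<le> \<parallel>A\<parallel>\<^sub>F\<^sup>2\<close>. It follows by deflation: conjugating \<open>A\<close> by a unitary matrix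
  whose first column is an eigenvector for \<open>\<mu>\<close> leaves the Frobenius norm unchanged and makes
  the first column \<open>(\<mu>, 0, \<dots>, 0)\<close>, so \<open>|\<mu>|\<^sup>2\<close> plus the norm of the remaining
  \<open>(n-1) \<times> (n-1)\<close> block is at most \<open>\<parallel>A\<parallel>\<^sub>F\<^sup>2\<close>, and that block carries the other eigenvalues.
  Cauchy-Schwarz then bounds \<open>\<Sum>|\<mu>\<^sub>i|\<close> by \<open>\<surd>(n \<parallel>A\<parallel>\<^sub>F\<^sup>2)\<close>. For the skew Laplacian every arc
  contributes two off-diagonal entries \<open>\<plusminus>1\<close>, so \<open>\<parallel>SL\<parallel>\<^sub>F\<^sup>2 = 2m + \<Sum>(d\<^sub>i\<^sup>+ - d\<^sub>i\<^sup>-)\<^sup>2 = 2M\<^sub>1\<close>.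
\<close>

definition frobenius_sq :: "complex mat \<Rightarrow> real" where
  "frobenius_sq A = (\<Sum>i<dim_row A. \<Sum>j<dim_col A. (cmod (A $$ (i, j)))\<^sup>2)"

definition mat_trace :: "'a :: comm_ring_1 mat \<Rightarrow> 'a" where
  "mat_trace A = (\<Sum>i<dim_row A. A $$ (i, i))"

definition unitary_mat :: "nat \<Rightarrow> complex mat \<Rightarrow> bool" where
  "unitary_mat n U \<longleftrightarrow> U \<in> carrier_mat n n \<and> mat_adjoint U * U = 1\<^sub>m n"

lemma mat_adjoint_dim [simp]:
  "dim_row (mat_adjoint A) = dim_col A" "dim_col (mat_adjoint A) = dim_row A"
  unfolding mat_adjoint_def by simp_all

lemma mat_adjoint_carrier [simp]: "A \<in> carrier_mat n m \<Longrightarrow> mat_adjoint A \<in> carrier_mat m n"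
  unfolding carrier_mat_def by simp

lemma mat_adjoint_index [simp]:
  "i < dim_col A \<Longrightarrow> j < dim_row A \<Longrightarrow> mat_adjoint A $$ (i, j) = conjugate (A $$ (j, i))"
  unfolding mat_adjoint_def by (simp add: mat_of_rows_index)

lemma mat_adjoint_mat_adjoint [simp]: "mat_adjoint (mat_adjoint A) = A"
  by (rule eq_matI) auto

lemma mat_adjoint_mult:
  assumes "A \<in> carrier_mat n k" "B \<in> carrier_mat k m"
  shows "mat_adjoint (A * B) = mat_adjoint B * mat_adjoint A"
  using assms
  by (intro eq_matI)
    (auto simp: scalar_prod_def sum_conjugate conjugate_dist_mul mult.commute intro!: sum.cong)

lemma mat_trace_mult_comm:
  assumes "A \<in> carrier_mat n k" "B \<in> carrier_mat k n"
  shows "mat_trace (A * B) = mat_trace (B * A)"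
proof -
  have "mat_trace (A * B) = (\<Sum>i<n. \<Sum>j<k. A $$ (i, j) * B $$ (j, i))"
    using assms by (auto simp: mat_trace_def scalar_prod_def atLeast0LessThan intro!: sum.cong)
  also have "\<dots> = (\<Sum>j<k. \<Sum>i<n. B $$ (j, i) * A $$ (i, j))"
    by (subst sum.swap) (simp add: mult.commute)
  also have "\<dots> = mat_trace (B * A)"
    using assms by (auto simp: mat_trace_def scalar_prod_def atLeast0LessThan intro!: sum.cong)
  finally show ?thesis .
qed

lemma mat_trace_mult_adjoint: "mat_trace (A * mat_adjoint A) = complex_of_real (frobenius_sq A)"
proof -
  have "mat_trace (A * mat_adjoint A)
      = (\<Sum>i<dim_row A. \<Sum>j<dim_col A. A $$ (i, j) * cnj (A $$ (i, j)))"
    by (auto simp: mat_trace_def scalar_prod_def atLeast0LessThan intro!: sum.cong)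
  then show ?thesis
    by (simp only: frobenius_sq_def of_real_sum complex_norm_square)
qed

lemma frobenius_sq_nonneg: "frobenius_sq A \<ge> 0"
  unfolding frobenius_sq_def by (intro sum_nonneg) auto

lemma unitary_mat_mult_adjoint:
  "unitary_mat n U \<Longrightarrow> U * mat_adjoint U = 1\<^sub>m n"
  unfolding unitary_mat_def by (auto intro: mat_mult_left_right_inverse)

lemma frobenius_sq_unitary_conj:
  assumes A: "A \<in> carrier_mat n n" and U: "unitary_mat n U"
  shows "frobenius_sq (mat_adjoint U * A * U) = frobenius_sq A"
proof -
  let ?U' = "mat_adjoint U" and ?A' = "mat_adjoint A"
  have c: "U \<in> carrier_mat n n" "?U' \<in> carrier_mat n n" "?A' \<in> carrier_mat n n"
    using U A unfolding unitary_mat_def by auto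
  note assoc = assoc_mult_mat[of _ n n _ n _ n] mult_carrier_mat[of _ n n _ n]
  have UU': "U * ?U' = 1\<^sub>m n" using unitary_mat_mult_adjoint[OF U] .
  have cancel: "U * (?U' * X) = X" if "X \<in> carrier_mat n n" for X
    using that c by (simp flip: assoc_mult_mat[of U n n ?U' n X n] add: UU')
  have "mat_adjoint (?U' * A * U) = ?U' * mat_adjoint (?U' * A)"
    using A c by (intro mat_adjoint_mult) auto
  also have "mat_adjoint (?U' * A) = ?A' * U"
    using mat_adjoint_mult[OF c(2) A] by simp
  finally have "(?U' * A * U) * mat_adjoint (?U' * A * U) = ?U' * (A * ?A' * U)"
    using A c by (simp add: assoc cancel)
  then have "mat_trace ((?U' * A * U) * mat_adjoint (?U' * A * U))
      = mat_trace ((A * ?A' * U) * ?U')"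
    by (metis mat_trace_mult_comm[of ?U' n n] A c mult_carrier_mat)
  also have "(A * ?A' * U) * ?U' = A * ?A'"
    using A c by (simp add: assoc UU')
  finally show ?thesis by (simp add: mat_trace_mult_adjoint)
qed

text \<open>
  The library's Schur decomposition conjugates by matrices with merely orthogonal columns,
  which do not preserve the Frobenius norm; hence the columns are normalized here.
\<close>

definition vec_cnormalize :: "complex vec \<Rightarrow> complex vec" where
  "vec_cnormalize w = complex_of_real (1 / sqrt (Re (w \<bullet>c w))) \<cdot>\<^sub>v w"

lemma vec_cnormalize_carrier [simp]: "w \<in> carrier_vec n \<Longrightarrow> vec_cnormalize w \<in> carrier_vec n"
  by (simp add: vec_cnormalize_def)

lemma cscalar_prod_vec_cnormalize:
  assumes "w \<in> carrier_vec n" "w' \<in> carrier_vec n"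
  shows "vec_cnormalize w \<bullet>c vec_cnormalize w'
    = complex_of_real (1 / sqrt (Re (w \<bullet>c w)) * (1 / sqrt (Re (w' \<bullet>c w')))) * (w \<bullet>c w')"
  using assms by (simp add: conjugate_smult_vec vec_cnormalize_def)

lemma cscalar_prod_vec_cnormalize_self:
  assumes w: "w \<in> carrier_vec n" "w \<noteq> 0\<^sub>v n"
  shows "vec_cnormalize w \<bullet>c vec_cnormalize w = 1"
proof -
  have "w \<bullet>c w > 0" using w by simp
  then have re: "Re (w \<bullet>c w) > 0" and eq: "w \<bullet>c w = complex_of_real (Re (w \<bullet>c w))"
    by (auto simp: less_complex_def complex_eq_iff)
  show ?thesis
    unfolding cscalar_prod_vec_cnormalize[OF w(1) w(1)]
    by (subst eq, simp only: of_real_mult[symmetric]) (use re in \<open>simp add: field_simps\<close>)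
qed

lemma unitary_mat_of_normalized_cols:
  assumes ws: "corthogonal ws" "set ws \<subseteq> carrier_vec n" "length ws = n"
  shows "unitary_mat n (mat_of_cols n (map vec_cnormalize ws))"
proof -
  define U where "U = mat_of_cols n (map vec_cnormalize ws)"
  have U: "U \<in> carrier_mat n n" unfolding U_def using ws by auto
  have w: "ws ! j \<in> carrier_vec n" if "j < n" for j
    using that ws by (metis nth_mem subsetD)
  have col: "col U j = vec_cnormalize (ws ! j)" if "j < n" for j
    unfolding U_def using that ws vec_cnormalize_carrier[OF w] by (subst col_mat_of_cols) auto
  have "mat_adjoint U * U = 1\<^sub>m n"
  proof (rule eq_matI)
    fix i j assume "i < dim_row (1\<^sub>m n)" "j < dim_col (1\<^sub>m n)"
    then have ij: "i < n" "j < n" by auto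
    have "(mat_adjoint U * U) $$ (i, j) = col U j \<bullet>c col U i"
      using U ij by (auto simp: scalar_prod_def intro!: sum.cong)
    also have "\<dots> = 1\<^sub>m n $$ (i, j)"
    proof (cases "i = j")
      case True
      have "ws ! i \<noteq> 0\<^sub>v n" using corthogonalD[OF ws(1), of i i] ij ws(3) by auto
      then show ?thesis using True ij cscalar_prod_vec_cnormalize_self[OF w] by (simp add: col)
    next
      case False
      then show ?thesis
        using corthogonalD[OF ws(1), of j i] ij ws(3)
        by (simp add: col cscalar_prod_vec_cnormalize[OF w w])
    qed
    finally show "(mat_adjoint U * U) $$ (i, j) = 1\<^sub>m n $$ (i, j)" .
  qed (use U in auto)
  with U show ?thesis unfolding U_def unitary_mat_def by simp
qed

lemma unitary_mat_with_first_col: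
  assumes v: "v \<in> carrier_vec n" and v0: "v \<noteq> 0\<^sub>v n"
  obtains U c where "unitary_mat n U" and "col U 0 = c \<cdot>\<^sub>v v"
proof -
  interpret cof_vec_space n "TYPE(complex)" .
  define b where "b = basis_completion v"
  define ws where "ws = gram_schmidt n b"
  from basis_completion[OF v v0, folded b_def]
  have b: "distinct b" "\<not> lin_dep (set b)" "set b \<subseteq> carrier_vec n" "length b = n" "hd b = v"
    by auto
  have n: "n \<noteq> 0" using v v0 by (cases n) auto
  with b obtain vs where bv: "b = v # vs" by (cases b) auto
  from gram_schmidt_result[OF b(3,1,2) refl, folded ws_def]
  have ws: "corthogonal ws" "set ws \<subseteq> carrier_vec n" "length ws = n"
    by (auto simp: b(4))
  have "hd ws = v" using gram_schmidt_hd[OF v, of vs] unfolding ws_def bv .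
  with n v ws(3) have "col (mat_of_cols n (map vec_cnormalize ws)) 0 = vec_cnormalize v"
    by (subst col_mat_of_cols) (auto simp: hd_conv_nth)
  then show ?thesis
    using that[OF unitary_mat_of_normalized_cols[OF ws]] unfolding vec_cnormalize_def by blast
qed

lemma similar_mat_unitary_conj:
  assumes A: "A \<in> carrier_mat n n" and U: "unitary_mat n U"
  shows "similar_mat A (mat_adjoint U * A * U)"
proof -
  let ?U' = "mat_adjoint U"
  have c: "U \<in> carrier_mat n n" "?U' \<in> carrier_mat n n"
    using U unfolding unitary_mat_def by auto
  have conj: "A = U * (?U' * A * U) * ?U'"
    using A c unitary_mat_mult_adjoint[OF U]
    by (simp add: assoc_mult_mat[of _ n n _ n _ n] mult_carrier_mat[of _ n n _ n]
        flip: assoc_mult_mat[of U n n ?U' n])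
  have "similar_mat_wit A (?U' * A * U) U ?U'"
    using A c U unitary_mat_mult_adjoint[OF U] unfolding unitary_mat_def
    by (intro similar_mat_witI[of _ _ n, OF _ _ conj]) auto
  then show ?thesis unfolding similar_mat_def by blast
qed

lemma unitary_conj_eigenvector_col:
  assumes A: "A \<in> carrier_mat n n" and U: "unitary_mat n U" and i: "i < n"
    and v: "v \<in> carrier_vec n" and Av: "A *\<^sub>v v = e \<cdot>\<^sub>v v" and col: "col U 0 = c \<cdot>\<^sub>v v"
  shows "(mat_adjoint U * A * U) $$ (i, 0) = (if i = 0 then e else 0)"
proof -
  let ?U' = "mat_adjoint U"
  have c: "U \<in> carrier_mat n n" "?U' \<in> carrier_mat n n" and UU: "?U' * U = 1\<^sub>m n"
    using U unfolding unitary_mat_def by auto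
  have "A *\<^sub>v col U 0 = e \<cdot>\<^sub>v col U 0"
    unfolding col using mult_mat_vec[OF A v] Av by (simp add: smult_smult_assoc mult.commute)
  then have "col (A * U) 0 = e \<cdot>\<^sub>v col U 0"
    using col_mult2[OF A c(1), of 0] i by simp
  then have "(?U' * A * U) $$ (i, 0) = e * (row ?U' i \<bullet> col U 0)"
    using i A c by (simp add: assoc_mult_mat[OF c(2) A c(1)])
  also have "row ?U' i \<bullet> col U 0 = (?U' * U) $$ (i, 0)"
    using i c by auto
  finally show ?thesis using UU i by simp
qed

lemma frobenius_sq_corner_le:
  assumes B: "B \<in> carrier_mat (Suc m) (Suc m)"
  shows "(cmod (B $$ (0, 0)))\<^sup>2 + frobenius_sq (mat m m (\<lambda>(i, j). B $$ (Suc i, Suc j)))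
    \<le> frobenius_sq B"
proof -
  define f where "f i j = (cmod (B $$ (i, j)))\<^sup>2" for i j
  have f0: "f i j \<ge> 0" for i j unfolding f_def by simp
  have "f 0 0 + (\<Sum>i<m. \<Sum>j<m. f (Suc i) (Suc j))
      \<le> (\<Sum>j<Suc m. f 0 j) + (\<Sum>i<m. f (Suc i) 0 + (\<Sum>j<m. f (Suc i) (Suc j)))"
  proof (rule add_mono)
    show "f 0 0 \<le> (\<Sum>j<Suc m. f 0 j)"
      by (simp add: sum.lessThan_Suc_shift f0 sum_nonneg del: sum.lessThan_Suc)
    show "(\<Sum>i<m. \<Sum>j<m. f (Suc i) (Suc j)) \<le> (\<Sum>i<m. f (Suc i) 0 + (\<Sum>j<m. f (Suc i) (Suc j)))"
      by (intro sum_mono) (simp add: f0)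
  qed
  also have "\<dots> = (\<Sum>i<Suc m. \<Sum>j<Suc m. f i j)"
    by (simp add: sum.lessThan_Suc_shift del: sum.lessThan_Suc)
  finally show ?thesis using B by (simp add: frobenius_sq_def f_def)
qed

lemma char_poly_split_first_col:
  assumes B: "B \<in> carrier_mat (Suc m) (Suc m)"
    and col0: "\<And>i. i < Suc m \<Longrightarrow> B $$ (i, 0) = (if i = 0 then e else 0)"
  shows "char_poly B = [:- e, 1:] * char_poly (mat m m (\<lambda>(i, j). B $$ (Suc i, Suc j)))"
proof -
  obtain B1 B2 B0 B3 where sp: "split_block B 1 1 = (B1, B2, B0, B3)"
    by (cases "split_block B 1 1") auto
  from B have "dim_row B = 1 + m" "dim_col B = 1 + m" by auto
  from split_block[OF sp this] have B2: "B2 \<in> carrier_mat 1 m"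
    and B3: "B3 \<in> carrier_mat m m" and blocks: "B = four_block_mat B1 B2 B0 B3" by auto
  have B1: "B1 = mat 1 1 (\<lambda>_. e)"
    using sp[unfolded split_block_def Let_def] col0[of 0] by auto
  have B0: "B0 = 0\<^sub>m m 1"
    using sp[unfolded split_block_def Let_def] col0 B by auto
  have B3': "B3 = mat m m (\<lambda>(i, j). B $$ (Suc i, Suc j))"
    using sp[unfolded split_block_def Let_def] B by auto
  have "char_poly B = char_poly B1 * char_poly B3"
    unfolding blocks B0 by (rule char_poly_four_block_zeros_col[OF _ B2 B3]) (simp add: B1)
  also have "char_poly B1 = [:- e, 1:]"
    by (simp add: B1 char_poly_defs det_def sign_def)
  finally show ?thesis unfolding B3' .
qed

lemma eigenvalue_deflation:
  assumes A: "A \<in> carrier_mat (Suc m) (Suc m)" and e: "eigenvalue A e"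
  obtains C where "C \<in> carrier_mat m m" and "char_poly A = [:- e, 1:] * char_poly C"
    and "(cmod e)\<^sup>2 + frobenius_sq C \<le> frobenius_sq A"
proof -
  obtain v where "eigenvector A v e" using find_eigenvector[OF A e] by blast
  then have v: "v \<in> carrier_vec (Suc m)" "v \<noteq> 0\<^sub>v (Suc m)" and Av: "A *\<^sub>v v = e \<cdot>\<^sub>v v"
    using A unfolding eigenvector_def by auto
  obtain U c where U: "unitary_mat (Suc m) U" and col: "col U 0 = c \<cdot>\<^sub>v v"
    using unitary_mat_with_first_col[OF v] .
  define B where "B = mat_adjoint U * A * U"
  define C where "C = mat m m (\<lambda>(i, j). B $$ (Suc i, Suc j))"
  have B: "B \<in> carrier_mat (Suc m) (Suc m)"
    using A U unfolding B_def unitary_mat_def by auto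
  have col0: "B $$ (i, 0) = (if i = 0 then e else 0)" if "i < Suc m" for i
    unfolding B_def using unitary_conj_eigenvector_col[OF A U that v(1) Av col] .
  have "char_poly A = char_poly B"
    unfolding B_def by (rule char_poly_similar[OF similar_mat_unitary_conj[OF A U]])
  also have "\<dots> = [:- e, 1:] * char_poly C"
    unfolding C_def by (rule char_poly_split_first_col[OF B col0])
  finally have "char_poly A = [:- e, 1:] * char_poly C" .
  moreover have "(cmod e)\<^sup>2 + frobenius_sq C \<le> frobenius_sq A"
    using frobenius_sq_corner_le[OF B] col0[of 0]
    unfolding C_def frobenius_sq_unitary_conj[OF A U, folded B_def] by simp
  ultimately show ?thesis using that[of C] by (simp add: C_def)
qed

theorem schur_inequality:
  assumes "A \<in> carrier_mat n n" and "char_poly A = (\<Prod>a\<leftarrow>es. [:- a, 1:])"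
  shows "(\<Sum>a\<leftarrow>es. (cmod a)\<^sup>2) \<le> frobenius_sq A"
  using assms
proof (induction es arbitrary: n A)
  case Nil
  then show ?case using frobenius_sq_nonneg by simp
next
  case (Cons e es n A)
  have "monic (\<Prod>a\<leftarrow>es. [:- a, 1:])" by (rule monic_prod_list) auto
  then have "degree (char_poly A) = Suc (degree (\<Prod>a\<leftarrow>es. [:- a, 1:]))"
    unfolding Cons.prems(2) list.map prod_list.Cons by (subst degree_mult_eq) auto
  then obtain m where n: "n = Suc m"
    using degree_monic_char_poly[OF Cons.prems(1)] by (cases n) auto
  have "eigenvalue A e"
    using Cons.prems by (simp add: eigenvalue_root_char_poly)
  then obtain C where C: "C \<in> carrier_mat m m" and cp: "char_poly A = [:- e, 1:] * char_poly C"
    and frob: "(cmod e)\<^sup>2 + frobenius_sq C \<le> frobenius_sq A"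
    using eigenvalue_deflation Cons.prems(1) unfolding n by metis
  have "[:- e, 1:] * char_poly C = [:- e, 1:] * (\<Prod>a\<leftarrow>es. [:- a, 1:])"
    using Cons.prems(2) unfolding cp by simp
  then have "char_poly C = (\<Prod>a\<leftarrow>es. [:- a, 1:])"
    by (subst (asm) mult_cancel_left) simp
  from Cons.IH[OF C this] frob show ?case by simp
qed

lemma proots_linear_factors: "proots (\<Prod>a\<leftarrow>es. [:- a, 1:]) = mset (es :: 'a :: idom list)"
proof -
  have "0 \<notin> set (map (\<lambda>a. [:- a, 1:]) es)" by auto
  from proots_prod_list[OF this] show ?thesis by (simp add: o_def)
qed

theorem sum_cmod_proots_char_poly_le:
  assumes A: "A \<in> carrier_mat n n"
  shows "(\<Sum>a\<in>#proots (char_poly A). cmod a) \<le> sqrt (real n * frobenius_sq A)"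
proof -
  obtain es where cp: "char_poly A = (\<Prod>a\<leftarrow>es. [:- a, 1:])" and len: "length es = n"
    using char_poly_factorized[OF A] by blast
  have "(\<Sum>a\<in>#proots (char_poly A). cmod a) = (\<Sum>i<n. cmod (es ! i))"
    unfolding cp proots_linear_factors using len
    by (simp add: sum_mset_sum_list sum_list_sum_nth atLeast0LessThan flip: mset_map)
  moreover have "(\<Sum>i<n. (cmod (es ! i))\<^sup>2) \<le> frobenius_sq A"
    using schur_inequality[OF A cp] len by (simp add: sum_list_sum_nth atLeast0LessThan o_def)
  ultimately have "(\<Sum>a\<in>#proots (char_poly A). cmod a)\<^sup>2 \<le> frobenius_sq A * real n"
    using sum_squared_le_sum_of_squares[of "\<lambda>i. cmod (es ! i)" "{..<n}"]
    by (simp add: order_trans mult_right_mono)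
  then show ?thesis by (simp add: real_le_rsqrt mult.commute)
qed

lemma num_arcs_eq_sum:
  "real (num_arcs n arc) = (\<Sum>i<n. \<Sum>j<n. if arc i j then 1 else 0)"
proof -
  have "{(i, j). i < n \<and> j < n \<and> arc i j} = Sigma {..<n} (\<lambda>i. {j \<in> {..<n}. arc i j})"
    by auto
  then have "num_arcs n arc = (\<Sum>i<n. card {j \<in> {..<n}. arc i j})"
    unfolding num_arcs_def by (simp add: card_SigmaI)
  then show ?thesis by (simp add: sum.inter_filter[symmetric])
qed

lemma skew_lap_carrier: "skew_lap n arc \<in> carrier_mat n n"
  unfolding skew_lap_def deg_diff_mat_def skew_adj_def by auto

lemma frobenius_sq_skew_lap:
  assumes G: "simple_digraph n arc"
  shows "frobenius_sq (map_mat complex_of_real (skew_lap n arc))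
    = 2 * real (num_arcs n arc) + (\<Sum>i<n. (real (out_deg n arc i) - real (in_deg n arc i))\<^sup>2)"
proof -
  define d where "d i = real (out_deg n arc i) - real (in_deg n arc i)" for i
  let ?\<chi> = "\<lambda>i j. if arc i j then 1 else 0 :: real"
  have entry: "(skew_lap n arc $$ (i, j))\<^sup>2
      = (if i = j then (d i)\<^sup>2 else 0) + ?\<chi> i j + ?\<chi> j i" if "i < n" "j < n" for i j
    using that G unfolding simple_digraph_def skew_lap_def deg_diff_mat_def skew_adj_def d_def
    by (auto simp: power2_eq_square)
  have "frobenius_sq (map_mat complex_of_real (skew_lap n arc))
      = (\<Sum>i<n. \<Sum>j<n. (if i = j then (d i)\<^sup>2 else 0) + ?\<chi> i j + ?\<chi> j i)"
    unfolding frobenius_sq_def using skew_lap_carrier[of n arc] by (simp add: entry)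
  also have "\<dots> = (\<Sum>i<n. \<Sum>j<n. (if i = j then (d i)\<^sup>2 else 0))
      + (\<Sum>i<n. \<Sum>j<n. ?\<chi> i j) + (\<Sum>i<n. \<Sum>j<n. ?\<chi> j i)"
    by (simp add: sum.distrib)
  also have "(\<Sum>i<n. \<Sum>j<n. ?\<chi> j i) = (\<Sum>i<n. \<Sum>j<n. ?\<chi> i j)"
    by (rule sum.swap)
  finally show ?thesis
    by (simp add: num_arcs_eq_sum d_def if_distrib cong: if_cong)
qed

theorem corollary2:
  fixes n :: nat and arc :: "nat \<Rightarrow> nat \<Rightarrow> bool"
  assumes "simple_digraph n arc"
  shows "SLE n arc \<le> sqrt (2 * (real (num_arcs n arc) + 1/2 *
           (\<Sum>i<n. (real (out_deg n arc i) - real (in_deg n arc i))^2)) * real n)"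
proof -
  have "map_mat complex_of_real (skew_lap n arc) \<in> carrier_mat n n"
    using skew_lap_carrier by simp
  from sum_cmod_proots_char_poly_le[OF this] show ?thesis
    unfolding SLE_def frobenius_sq_skew_lap[OF assms] by (simp add: algebra_simps)
qed

end
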